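(* Let $L\subset S^3$ be an oriented link. The set $\widehat{\mathcal{B}}_L$ equipped with the operations $\uparrow,\downarrow$ defined in the context is a biquandle.
   Context: An oriented link $L$ is an oriented subspace of $S^3$ homeomorphic to a finite disjoint union of circles. Let $N_L$ be a regular neighborhood of $L$ and $E_L$ the closure of $S^3\setminus N_L$; the orientation of $L$ induces an orientation of its normal bundle by the right-hand rule. Choose a 3-ball $B^3\subset S^3$ with $N_L\subset B^3$ and antipodal points $z_0,z_1\in\partial B^3$. For a path $a$, $\overline{a}(t)=a(1-t)$; $a\cdot b$ is concatenation. Let $\mathcal{B}_L$ be the set of pairs $(a_0,a_1)$ with $a_i\colon[0,1]\to E_L$ a path from a point of $\partial N_L$ to $z_i$ and $a_0(0)=a_1(0)$. Set $(a_0,a_1)\sim(b_0,b_1)$ if there is a homotopy $H_t\colon[0,1]\to E_L$ with $H_0=\overline{a_0}\cdot a_1$, $H_1=\overline{b_0}\cdot b_1$, $H_t(0)=z_0$, $H_t(1)=z_1$, $H_t(\tfrac12)\in\partial N_L$ for all $t$. Let $\widehat{\mathcal{B}}_L=\mathcal{B}_L/\!\sim$, with $[a_0,a_1]$ the class of $(a_0,a_1)$. For $p\in\partial N_L$, $m_p$ is the loop in $\partial N_L$ at $p$ going once positively around the meridian of the corresponding component of $L$. The (well-defined) operations on $\widehat{\mathcal{B}}_L$ are $[a_0,a_1]\uparrow[b_0,b_1]=[a_0\cdot\overline{b_0}\cdot m_{b_0(0)}\cdot b_0,\ a_1]$ and $[a_0,a_1]\downarrow[b_0,b_1]=[a_0,\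 a_1\cdot\overline{b_1}\cdot m_{b_1(0)}\cdot b_1]$. A biquandle is a set $B$ with binary operations $\uparrow,\downarrow$, closed under them, such that: (1) for each $a$, $x\mapsto x\uparrow a$ and $x\mapsto x\downarrow a$ are bijections of $B$, and $S(x,y)=(y\downarrow x,\ x\uparrow y)$ is a bijection of $B\times B$; (2) with $f_a(x)=x\uparrow a$, $g_a(x)=x\downarrow a$: $f_a^{-1}(a)=a\downarrow f_a^{-1}(a)$ and $g_a^{-1}(a)=a\uparrow g_a^{-1}(a)$ for all $a$; (3) for all $a,b,c$: $(a\uparrow b)\uparrow c=(a\uparrow(c\downarrow b))\uparrow(b\uparrow c)$; $(a\downarrow b)\uparrow(c\downarrow(b\uparrow a))=(a\uparrow c)\downarrow(b\uparrow(c\downarrow a))$; $(a\downarrow b)\downarrow c=(a\downarrow(c\uparrow b))\downarrow(b\downarrow c)$. *)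

theory Defs
  imports "HOL-Analysis.Analysis"
begin

definition biquandle :: "'b set \<Rightarrow> ('b \<Rightarrow> 'b \<Rightarrow> 'b) \<Rightarrow> ('b \<Rightarrow> 'b \<Rightarrow> 'b) \<Rightarrow> bool" where
  "biquandle B up down \<longleftrightarrow>
     (\<forall>x\<in>B. \<forall>y\<in>B. up x y \<in> B \<and> down x y \<in> B) \<and>
     (\<forall>a\<in>B. bij_betw (\<lambda>x. up x a) B B \<and> bij_betw (\<lambda>x. down x a) B B) \<and>
     bij_betw (\<lambda>(x, y). (down y x, up x y)) (B \<times> B) (B \<times> B) \<and>
     (\<forall>a\<in>B. inv_into B (\<lambda>x. up x a) a = down a (inv_into B (\<lambda>x. up x a) a)) \<and>
     (\<forall>a\<in>B. inv_into B (\<lambda>x. down x a) a = up a (inv_into B (\<lambda>x. down x a) a)) \<and>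
     (\<forall>a\<in>B. \<forall>b\<in>B. \<forall>c\<in>B.
        up (up a b) c = up (up a (down c b)) (up b c) \<and>
        up (down a b) (down c (up b a)) = down (up a c) (up b (down c a)) \<and>
        down (down a b) c = down (down a (up c b)) (down b c))"

text \<open>A link with k components and a closed tubular neighbourhood N_L is given by a
  topological embedding phi of k copies of the solid torus S^1 x D^2 into S^3;
  the link is the image of the cores S^1 x {0}.\<close>

definition solid_tori :: "nat \<Rightarrow> (nat \<times> complex \<times> complex) set" where
  "solid_tori k = {(i, u, w). i < k \<and> cmod u = 1 \<and> cmod w \<le> 1}"

definition boundary_tori :: "nat \<Rightarrow> (nat \<times> complex \<times> complex) set" where
  "boundary_tori k = {(i, u, w). i < k \<and> cmod u = 1 \<and> cmod w = 1}"

definition link_of :: "(nat \<times> complex \<times> complex \<Rightarrow> real^4) \<Rightarrow> nat \<Rightarrow> (real^4) set" where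
  "link_of \<phi> k = \<phi> ` {(i, u, w). i < k \<and> cmod u = 1 \<and> w = 0}"

definition nbhd :: "(nat \<times> complex \<times> complex \<Rightarrow> real^4) \<Rightarrow> nat \<Rightarrow> (real^4) set" where
  "nbhd \<phi> k = \<phi> ` solid_tori k"

definition bd_nbhd :: "(nat \<times> complex \<times> complex \<Rightarrow> real^4) \<Rightarrow> nat \<Rightarrow> (real^4) set" where
  "bd_nbhd \<phi> k = \<phi> ` boundary_tori k"

definition exterior :: "(nat \<times> complex \<times> complex \<Rightarrow> real^4) \<Rightarrow> nat \<Rightarrow> (real^4) set" where
  "exterior \<phi> k = closure (sphere 0 1 - nbhd \<phi> k)"

definition meridian :: "(nat \<times> complex \<times> complex \<Rightarrow> real^4) \<Rightarrow> nat \<Rightarrow> real^4 \<Rightarrow> (real \<Rightarrow> real^4)" where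
  "meridian \<phi> k p = (case inv_into (solid_tori k) \<phi> p of
      (i, u, w) \<Rightarrow> (\<lambda>t. \<phi> (i, u, w * cis (2 * pi * t))))"

type_synonym path4 = "real \<Rightarrow> real^4"

definition BL :: "(real^4) set \<Rightarrow> (real^4) set \<Rightarrow> real^4 \<Rightarrow> real^4 \<Rightarrow> (path4 \<times> path4) set" where
  "BL E dN z0 z1 = {(a0, a1). path a0 \<and> path a1 \<and> path_image a0 \<subseteq> E \<and> path_image a1 \<subseteq> E \<and>
      pathstart a0 \<in> dN \<and> pathstart a0 = pathstart a1 \<and> pathfinish a0 = z0 \<and> pathfinish a1 = z1}"

definition BL_rel :: "(real^4) set \<Rightarrow> (real^4) set \<Rightarrow> real^4 \<Rightarrow> real^4 \<Rightarrow> ((path4 \<times> path4) \<times> (path4 \<times> path4)) set" where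
  "BL_rel E dN z0 z1 = {((a0, a1), (b0, b1)).
      (a0, a1) \<in> BL E dN z0 z1 \<and> (b0, b1) \<in> BL E dN z0 z1 \<and>
      homotopic_with_canon (\<lambda>H. H 0 = z0 \<and> H 1 = z1 \<and> H (1/2) \<in> dN) {0..1} E
        (reversepath a0 +++ a1) (reversepath b0 +++ b1)}"

definition BL_hat :: "(real^4) set \<Rightarrow> (real^4) set \<Rightarrow> real^4 \<Rightarrow> real^4 \<Rightarrow> (path4 \<times> path4) set set" where
  "BL_hat E dN z0 z1 = BL E dN z0 z1 // BL_rel E dN z0 z1"

definition BL_up :: "((path4 \<times> path4) \<times> (path4 \<times> path4)) set \<Rightarrow> (real^4 \<Rightarrow> path4)
    \<Rightarrow> (path4 \<times> path4) set \<Rightarrow> (path4 \<times> path4) set \<Rightarrow> (path4 \<times> path4) set" where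
  "BL_up R m X Y = (case SOME x. x \<in> X of (a0, a1) \<Rightarrow> case SOME y. y \<in> Y of (b0, b1) \<Rightarrow>
      R `` {(a0 +++ (reversepath b0 +++ (m (pathstart b0) +++ b0)), a1)})"

definition BL_down :: "((path4 \<times> path4) \<times> (path4 \<times> path4)) set \<Rightarrow> (real^4 \<Rightarrow> path4)
    \<Rightarrow> (path4 \<times> path4) set \<Rightarrow> (path4 \<times> path4) set \<Rightarrow> (path4 \<times> path4) set" where
  "BL_down R m X Y = (case SOME x. x \<in> X of (a0, a1) \<Rightarrow> case SOME y. y \<in> Y of (b0, b1) \<Rightarrow>
      R `` {(a0, a1 +++ (reversepath b1 +++ (m (pathstart b1) +++ b1)))})"

end

theory Submission
  imports Defs
begin

(* Two pairs of paths in the exterior E are equivalent iff, after sliding the common starting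
   point along a path d in the boundary D, the components become homotopic: a_i ~ d b_i; the track
   of the midpoint of a homotopy between the arcs a0^-1 a1 and b0^-1 b1 is such a d. In these terms
   the operations append the loop L(b) = b^-1 m b to one component, and they are well defined
   because a meridian commutes, up to homotopy in D, with every path in D (rotate the fibre circles
   of the solid torus along the path). Appending L(b)^-1 inverts the operations, the second axiom
   is a slide along the reversed meridian at the starting point, and the third follows from
   L(b L(c)) ~ L(c)^-1 L(b) L(c). The only topological input about the link is that the boundary
   of N_L lies in the exterior, which is invariance of domain. *)

section \<open>Path homotopy calculus\<close>

definition path_in :: "'a::topological_space set \<Rightarrow> (real \<Rightarrow> 'a) \<Rightarrow> bool" where
  "path_in S p \<longleftrightarrow> path p \<and> path_image p \<subseteq> S"

lemma path_in_join [simp]: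
  "path_in S p \<Longrightarrow> path_in S q \<Longrightarrow> pathfinish p = pathstart q \<Longrightarrow> path_in S (p +++ q)"
  by (auto simp: path_in_def path_image_join)

lemma path_in_reversepath [simp]: "path_in S (reversepath p) \<longleftrightarrow> path_in S p"
  by (auto simp: path_in_def)

lemma path_in_subset: "path_in S p \<Longrightarrow> S \<subseteq> T \<Longrightarrow> path_in T p"
  by (auto simp: path_in_def)

lemma homotopic_paths_imp_path_in: "homotopic_paths S p q \<Longrightarrow> path_in S p \<and> path_in S q"
  by (simp add: path_in_def homotopic_paths_imp_path homotopic_paths_imp_subset)

lemma homotopic_paths_refl_in: "path_in S p \<Longrightarrow> homotopic_paths S p p"
  by (simp add: path_in_def)

lemma homotopic_paths_join_left:
  "homotopic_paths S p p' \<Longrightarrow> path_in S q \<Longrightarrow> pathfinish p = pathstart q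
   \<Longrightarrow> homotopic_paths S (p +++ q) (p' +++ q)"
  by (simp add: homotopic_paths_join path_in_def)

lemma homotopic_paths_join_right:
  "path_in S p \<Longrightarrow> homotopic_paths S q q' \<Longrightarrow> pathfinish p = pathstart q
   \<Longrightarrow> homotopic_paths S (p +++ q) (p +++ q')"
  by (simp add: homotopic_paths_join path_in_def)

lemma homotopic_paths_assoc_in:
  "path_in S p \<Longrightarrow> path_in S q \<Longrightarrow> path_in S r \<Longrightarrow> pathfinish p = pathstart q \<Longrightarrow>
   pathfinish q = pathstart r \<Longrightarrow> homotopic_paths S (p +++ (q +++ r)) ((p +++ q) +++ r)"
  by (simp add: path_in_def homotopic_paths_assoc)

lemma homotopic_paths_assoc_in':
  "path_in S p \<Longrightarrow> path_in S q \<Longrightarrow> path_in S r \<Longrightarrow> pathfinish p = pathstart q \<Longrightarrow>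
   pathfinish q = pathstart r \<Longrightarrow> homotopic_paths S ((p +++ q) +++ r) (p +++ (q +++ r))"
  by (simp add: homotopic_paths_assoc_in homotopic_paths_sym)

lemma homotopic_paths_cancel_rev_left:
  fixes S :: "'a::real_normed_vector set"
  assumes "path_in S p" "path_in S q" "pathfinish p = pathstart q"
  shows "homotopic_paths S (reversepath p +++ (p +++ q)) q"
proof -
  have "homotopic_paths S (reversepath p +++ (p +++ q)) ((reversepath p +++ p) +++ q)"
    using assms by (simp add: homotopic_paths_assoc_in)
  also have "homotopic_paths S \<dots> (linepath (pathstart q) (pathstart q) +++ q)"
    using assms homotopic_paths_linv[of p S] by (intro homotopic_paths_join_left) (auto simp: path_in_def)
  also have "homotopic_paths S \<dots> q"
    using assms by (simp add: path_in_def homotopic_paths_lid)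
  finally show ?thesis .
qed

lemma homotopic_paths_cancel_left:
  fixes S :: "'a::real_normed_vector set"
  shows "path_in S p \<Longrightarrow> path_in S q \<Longrightarrow> pathstart p = pathstart q
   \<Longrightarrow> homotopic_paths S (p +++ (reversepath p +++ q)) q"
  using homotopic_paths_cancel_rev_left[of S "reversepath p" q] by simp

lemma homotopic_paths_cancel_right:
  fixes S :: "'a::real_normed_vector set"
  assumes "path_in S p" "path_in S q" "pathfinish q = pathstart p"
  shows "homotopic_paths S ((q +++ p) +++ reversepath p) q"
proof -
  have "homotopic_paths S ((q +++ p) +++ reversepath p) (q +++ (p +++ reversepath p))"
    using assms by (simp add: homotopic_paths_assoc_in')
  also have "homotopic_paths S \<dots> (q +++ linepath (pathfinish q) (pathfinish q))"
    using assms by (intro homotopic_paths_join_right) (auto simp: path_in_def homotopic_paths_rinv)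
  also have "homotopic_paths S \<dots> q"
    using assms homotopic_paths_rid[of q S] by (simp add: path_in_def)
  finally show ?thesis .
qed

lemma homotopic_paths_join_slide:
  assumes "homotopic_paths S a (d +++ a')" "homotopic_paths S l l'"
    and "pathfinish a = pathstart l" "pathfinish d = pathstart a'"
  shows "homotopic_paths S (a +++ l) (d +++ (a' +++ l'))"
proof -
  have "path_in S d" "path_in S a'" "path_in S l'"
    using assms homotopic_paths_imp_path_in[OF assms(1)] homotopic_paths_imp_path_in[OF assms(2)]
    by (auto simp: path_in_def path_image_join)
  moreover have "pathfinish a' = pathstart l'"
    using assms homotopic_paths_imp_pathstart homotopic_paths_imp_pathfinish by fastforce
  ultimately show ?thesis
    using assms homotopic_paths_join homotopic_paths_assoc_in' homotopic_paths_trans by metis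
qed

lemma homotopic_paths_conjugate:
  fixes S :: "'a::real_normed_vector set"
  assumes b: "path_in S b'" and d: "path_in S d" and l: "path_in S l'"
    and hb: "homotopic_paths S b (d +++ b')" and hl: "homotopic_paths S l (d +++ (l' +++ reversepath d))"
    and "pathfinish l = pathstart b" "pathstart l' = pathstart b'" "pathfinish l' = pathstart b'"
    and "pathfinish d = pathstart b'"
  shows "homotopic_paths S (reversepath b +++ (l +++ b)) (reversepath b' +++ (l' +++ b'))"
proof -
  let ?c = "d +++ (l' +++ reversepath d)"
  have cancel: "homotopic_paths S (reversepath d +++ (?c +++ (d +++ b'))) (l' +++ b')"
  proof -
    have "homotopic_paths S (reversepath d +++ (?c +++ (d +++ b'))) ((reversepath d +++ ?c) +++ (d +++ b'))"
      using assms by (intro homotopic_paths_assoc_in) auto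
    also have "homotopic_paths S \<dots> ((l' +++ reversepath d) +++ (d +++ b'))"
      using assms by (intro homotopic_paths_join_left homotopic_paths_cancel_rev_left) auto
    also have "homotopic_paths S \<dots> (l' +++ (reversepath d +++ (d +++ b')))"
      using assms by (intro homotopic_paths_assoc_in') auto
    also have "homotopic_paths S \<dots> (l' +++ b')"
      using assms by (intro homotopic_paths_join_right homotopic_paths_cancel_rev_left) auto
    finally show ?thesis .
  qed
  have "pathstart b = pathstart d" "pathstart l = pathstart d"
    using homotopic_paths_imp_pathstart[OF hb] homotopic_paths_imp_pathstart[OF hl] by auto
  then have "homotopic_paths S (reversepath b +++ (l +++ b))
      (reversepath (d +++ b') +++ (?c +++ (d +++ b')))"
    using assms by (intro homotopic_paths_join homotopic_paths_reversepath_D hb hl) auto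
  also have "reversepath (d +++ b') = reversepath b' +++ reversepath d"
    using assms by (simp add: reversepath_joinpaths)
  also have "homotopic_paths S ((reversepath b' +++ reversepath d) +++ (?c +++ (d +++ b')))
     (reversepath b' +++ (reversepath d +++ (?c +++ (d +++ b'))))"
    using assms by (intro homotopic_paths_assoc_in') auto
  also have "homotopic_paths S \<dots> (reversepath b' +++ (l' +++ b'))"
    using assms cancel by (intro homotopic_paths_join_right) auto
  finally show ?thesis .
qed

lemma homotopic_paths_conjugate_join:
  assumes "path_in S b" "path_in S l" "path_in S M" "pathfinish b = pathstart l"
    and "pathstart M = pathstart b" "pathfinish M = pathstart b"
  shows "homotopic_paths S (reversepath (b +++ l) +++ (M +++ (b +++ l)))
           (reversepath l +++ ((reversepath b +++ (M +++ b)) +++ l))"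
proof -
  have "homotopic_paths S ((reversepath l +++ reversepath b) +++ (M +++ (b +++ l)))
      (reversepath l +++ (reversepath b +++ (M +++ (b +++ l))))"
    by (rule homotopic_paths_assoc_in') (use assms in simp_all)
  also have "homotopic_paths S \<dots> (reversepath l +++ (reversepath b +++ ((M +++ b) +++ l)))"
    by (rule homotopic_paths_join_right, simp add: assms, rule homotopic_paths_join_right, simp add: assms,
        rule homotopic_paths_assoc_in) (use assms in simp_all)
  also have "homotopic_paths S \<dots> (reversepath l +++ ((reversepath b +++ (M +++ b)) +++ l))"
    by (rule homotopic_paths_join_right, simp add: assms, rule homotopic_paths_assoc_in)
      (use assms in simp_all)
  finally show ?thesis
    using assms(4) by (simp add: reversepath_joinpaths)
qed

lemma homotopic_paths_insert_conjugate:
  fixes S :: "'a::real_normed_vector set"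
  assumes "path_in S a" "pathfinish a = z" "path_in S P" "pathstart P = z" "pathfinish P = z"
    and "path_in S Q" "pathstart Q = z" "pathfinish Q = z"
    and hX: "homotopic_paths S X (reversepath Q +++ (P +++ Q))"
  shows "homotopic_paths S ((a +++ P) +++ Q) ((a +++ Q) +++ X)"
proof -
  have "pathstart X = z"
    using homotopic_paths_imp_pathstart[OF hX] assms by simp
  then have "homotopic_paths S ((a +++ Q) +++ X) ((a +++ Q) +++ (reversepath Q +++ (P +++ Q)))"
    using assms by (intro homotopic_paths_join_right) auto
  also have "homotopic_paths S \<dots> (a +++ (Q +++ (reversepath Q +++ (P +++ Q))))"
    using assms by (intro homotopic_paths_assoc_in') auto
  also have "homotopic_paths S \<dots> (a +++ (P +++ Q))"
    using assms by (intro homotopic_paths_join_right homotopic_paths_cancel_left) auto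
  also have "homotopic_paths S \<dots> ((a +++ P) +++ Q)"
    using assms by (intro homotopic_paths_assoc_in) auto
  finally show ?thesis by (rule homotopic_paths_sym)
qed

lemma homotopic_paths_square:
  fixes H :: "real \<times> real \<Rightarrow> 'a::topological_space"
  assumes cH: "continuous_on ({0..1} \<times> {0..1}) H" and HS: "H ` ({0..1} \<times> {0..1}) \<subseteq> S"
    and left: "\<And>s. s \<in> {0..1} \<Longrightarrow> H (0, s) = l s" and right: "\<And>s. s \<in> {0..1} \<Longrightarrow> H (1, s) = r s"
    and bottom: "\<And>t. t \<in> {0..1} \<Longrightarrow> H (t, 0) = b t" and top: "\<And>t. t \<in> {0..1} \<Longrightarrow> H (t, 1) = u t"
  shows "homotopic_paths S (l +++ u) (b +++ r)"
proof -
  let ?Q = "{0..1::real} \<times> {0..1::real}"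
  define g1 where "g1 = linepath (0::real, 0::real) (0, 1) +++ linepath (0, 1) (1, 1)"
  define g2 where "g2 = linepath (0::real, 0::real) (1, 0) +++ linepath (1, 0) (1, 1)"
  have segment_in: "closed_segment x y \<subseteq> ?Q" if "x \<in> ?Q" "y \<in> ?Q" for x y
    using that by (simp add: closed_segment_subset convex_Times)
  have img: "path_image g1 \<subseteq> ?Q" "path_image g2 \<subseteq> ?Q"
    unfolding g1_def g2_def by (intro subset_path_image_join; simp add: segment_in)+
  have "homotopic_paths ?Q g1 g2"
  proof (rule homotopic_paths_linear)
    show "path g1" "path g2" "pathstart g2 = pathstart g1" "pathfinish g2 = pathfinish g1"
      unfolding g1_def g2_def by auto
    show "closed_segment (g1 t) (g2 t) \<subseteq> ?Q" if "t \<in> {0..1}" for t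
      using img that by (intro segment_in) (auto simp: path_image_def)
  qed
  then have hg: "homotopic_paths S (H \<circ> g1) (H \<circ> g2)"
    by (rule homotopic_paths_continuous_image) (use cH HS in auto)
  have "H \<circ> g1 = (\<lambda>s. H (0, s)) +++ (\<lambda>t. H (t, 1))"
    unfolding g1_def path_compose_join by (simp add: o_def linepath_def)
  then have "homotopic_paths S (l +++ u) (H \<circ> g1)"
    using homotopic_paths_imp_path_in[OF hg] left top
    by (intro homotopic_paths_sym[OF homotopic_paths_eq]) (auto simp: path_in_def joinpaths_def)
  also have "homotopic_paths S (H \<circ> g1) (H \<circ> g2)"
    by (rule hg)
  also have "H \<circ> g2 = (\<lambda>t. H (t, 0)) +++ (\<lambda>s. H (1, s))"
    unfolding g2_def path_compose_join by (simp add: o_def linepath_def)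
  then have "homotopic_paths S (H \<circ> g2) (b +++ r)"
    using homotopic_paths_imp_path_in[OF hg] bottom right
    by (intro homotopic_paths_eq) (auto simp: path_in_def joinpaths_def)
  finally show ?thesis .
qed

lemma continuous_on_square_half:
  fixes H :: "real \<times> real \<Rightarrow> 'a::topological_space"
  assumes cH: "continuous_on ({0..1} \<times> {0..1}) H" and HS: "H ` ({0..1} \<times> {0..1}) \<subseteq> S"
    and "0 \<le> c" "c \<le> 1/2"
  shows "continuous_on ({0..1} \<times> {0..1}) (\<lambda>y. H (fst y, c + snd y / 2))"
    and "(\<lambda>y. H (fst y, c + snd y / 2)) ` ({0..1} \<times> {0..1}) \<subseteq> S"
proof -
  let ?Q = "{0..1::real} \<times> {0..1::real}"
  have sub: "(\<lambda>y. (fst y, c + snd y / 2)) ` ?Q \<subseteq> ?Q"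
    using assms(3,4) by auto
  have "continuous_on ?Q (\<lambda>y::real \<times> real. (fst y, c + snd y / 2))"
    by (intro continuous_intros) auto
  then show "continuous_on ?Q (\<lambda>y. H (fst y, c + snd y / 2))"
    using continuous_on_compose2[OF cH] sub by auto
  show "(\<lambda>y. H (fst y, c + snd y / 2)) ` ?Q \<subseteq> S"
    using image_mono[OF sub, of H] HS unfolding image_image by blast
qed

lemma continuous_on_subpath_to_finish:
  assumes "path d"
  shows "continuous_on ({0..1} \<times> {0..1}) (\<lambda>y. subpath (fst y) 1 d (snd y))"
  unfolding subpath_def
proof (rule continuous_on_compose2[of "{0..1}" d])
  show "continuous_on {0..1} d"
    using assms by (simp add: path_def)
  show "continuous_on ({0..1} \<times> {0..1}) (\<lambda>y::real \<times> real. (1 - fst y) * snd y + fst y)"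
    by (intro continuous_intros)
  show "(\<lambda>y. (1 - fst y) * snd y + fst y) ` ({0..1} \<times> {0..1}) \<subseteq> {0..1::real}"
  proof (rule image_subsetI)
    fix y :: "real \<times> real"
    assume y: "y \<in> {0..1} \<times> {0..1}"
    then have "0 \<le> (1 - fst y) * snd y" "(1 - fst y) * snd y \<le> 1 - fst y"
      using mult_left_le[of "snd y" "1 - fst y"] by auto
    then show "(1 - fst y) * snd y + fst y \<in> {0..1}"
      using y by auto
  qed
qed

section \<open>The biquandle of a meridian system\<close>

text \<open>E, D and m stand for the exterior E_L, the boundary of N_L and the meridians m_p; the base
  points z0 and z1 are arbitrary.\<close>

locale meridian_system =
  fixes E D :: "(real^4) set" and z0 z1 :: "real^4" and m :: "real^4 \<Rightarrow> path4"
  assumes boundary_subset: "D \<subseteq> E"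
    and path_in_meridian: "\<And>p. p \<in> D \<Longrightarrow> path_in D (m p)"
    and pathstart_meridian [simp]: "\<And>p. p \<in> D \<Longrightarrow> pathstart (m p) = p"
    and pathfinish_meridian [simp]: "\<And>p. p \<in> D \<Longrightarrow> pathfinish (m p) = p"
    and meridian_commute: "\<And>d. path_in D d \<Longrightarrow>
       homotopic_paths D (m (pathstart d) +++ d) (d +++ m (pathfinish d))"
begin

abbreviation "hp \<equiv> homotopic_paths E"
abbreviation "B \<equiv> BL E D z0 z1"
abbreviation "R \<equiv> BL_rel E D z0 z1"

lemma path_in_meridian_E [simp]: "p \<in> D \<Longrightarrow> path_in E (m p)"
  using path_in_meridian boundary_subset by (rule path_in_subset)

lemma path_in_boundary_E: "path_in D d \<Longrightarrow> path_in E d"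
  using boundary_subset path_in_subset by blast

lemma meridian_conjugate:
  assumes d: "path_in D d"
  shows "hp (m (pathstart d)) (d +++ (m (pathfinish d) +++ reversepath d))"
proof -
  have ends: "pathstart d \<in> D" "pathfinish d \<in> D"
    using d by (auto simp: path_in_def pathstart_in_path_image pathfinish_in_path_image subsetD)
  have "homotopic_paths D (m (pathstart d)) ((m (pathstart d) +++ d) +++ reversepath d)"
    using d ends path_in_meridian
    by (intro homotopic_paths_sym[OF homotopic_paths_cancel_right]) simp_all
  also have "homotopic_paths D \<dots> ((d +++ m (pathfinish d)) +++ reversepath d)"
    using d ends by (intro homotopic_paths_join_left meridian_commute) simp_all
  also have "homotopic_paths D \<dots> (d +++ (m (pathfinish d) +++ reversepath d))"
    using d ends path_in_meridian by (intro homotopic_paths_assoc_in') simp_all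
  finally show ?thesis
    using boundary_subset by (rule homotopic_paths_subset)
qed

definition crosses_boundary :: "path4 \<Rightarrow> bool" where
  "crosses_boundary H \<longleftrightarrow> H 0 = z0 \<and> H 1 = z1 \<and> H (1/2) \<in> D"

abbreviation "crossing_homotopic \<equiv> homotopic_with_canon crosses_boundary {0..1} E"

definition arc :: "path4 \<times> path4 \<Rightarrow> path4" where
  "arc x = reversepath (fst x) +++ snd x"

lemma BL_rel_iff: "(x, y) \<in> R \<longleftrightarrow> x \<in> B \<and> y \<in> B \<and> crossing_homotopic (arc x) (arc y)"
  by (cases x; cases y) (simp add: BL_rel_def crosses_boundary_def[abs_def] arc_def)

lemma BL_iff: "x \<in> B \<longleftrightarrow> path_in E (fst x) \<and> path_in E (snd x) \<and> pathstart (fst x) \<in> D \<and>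
   pathstart (snd x) = pathstart (fst x) \<and> pathfinish (fst x) = z0 \<and> pathfinish (snd x) = z1"
  by (cases x) (auto simp: BL_def path_in_def)

lemma BL_memD:
  assumes "x \<in> B"
  shows "path_in E (fst x)" "path_in E (snd x)" "pathstart (fst x) \<in> D"
    "pathstart (snd x) = pathstart (fst x)" "pathfinish (fst x) = z0" "pathfinish (snd x) = z1"
  using assms by (simp_all add: BL_iff)

lemma equiv_BL_rel: "equiv B R"
proof (rule equivI)
  show "R \<subseteq> B \<times> B"
    by (auto simp: BL_rel_iff)
  show "refl_on B R"
  proof (rule refl_onI)
    fix x assume x: "x \<in> B"
    then have "path_in E (arc x)"
      by (simp add: BL_iff arc_def)
    moreover have "crosses_boundary (arc x)"
      using x by (auto simp: BL_iff arc_def crosses_boundary_def joinpaths_def reversepath_def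
          pathstart_def pathfinish_def)
    ultimately show "(x, x) \<in> R"
      using x by (auto simp: BL_rel_iff path_in_def path_def path_image_def image_subset_iff_funcset
          continuous_map_in_subtopology)
  qed
  show "sym R"
    by (rule symI) (auto simp: BL_rel_iff intro: homotopic_with_symD)
  show "trans R"
    by (rule transI) (auto simp: BL_rel_iff intro: homotopic_with_trans)
qed

lemma crossing_homotopic_join:
  assumes "hp p p'" "hp q q'" "pathfinish p = pathstart q" "pathstart p = z0" "pathfinish q = z1"
    and "pathfinish p \<in> D"
  shows "crossing_homotopic (p +++ q) (p' +++ q')"
  using assms
  apply (clarsimp simp: homotopic_paths_def homotopic_with_def crosses_boundary_def)
  apply (rename_tac k1 k2)
  apply (rule_tac x="(\<lambda>y. ((k1 \<circ> Pair (fst y)) +++ (k2 \<circ> Pair (fst y))) (snd y))" in exI)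
  apply (intro conjI continuous_intros continuous_on_homotopic_join_lemma;
      force simp: joinpaths_def pathstart_def pathfinish_def path_image_def)
  done

lemma crossing_homotopic_iff:
  "crossing_homotopic f g \<longleftrightarrow> (\<exists>H :: real \<times> real \<Rightarrow> real^4.
     continuous_on ({0..1} \<times> {0..1}) H \<and> H ` ({0..1} \<times> {0..1}) \<subseteq> E \<and>
     (\<forall>s\<in>{0..1}. H (0, s) = f s) \<and> (\<forall>s\<in>{0..1}. H (1, s) = g s) \<and>
     (\<forall>t\<in>{0..1}. crosses_boundary (\<lambda>s. H (t, s))))"
  by (subst homotopic_with) (auto simp: crosses_boundary_def continuous_map_in_subtopology
      image_subset_iff_funcset simp flip: subtopology_Times)

lemma crossing_homotopic_trans [trans]:
  "crossing_homotopic f g \<Longrightarrow> crossing_homotopic g h \<Longrightarrow> crossing_homotopic f h"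
  by (rule homotopic_with_trans)

lemma continuous_on_arc_slide:
  assumes d: "path d" and b0: "path b0" and b1: "path b1"
    and "pathstart b0 = pathfinish d" "pathstart b1 = pathfinish d"
  shows "continuous_on ({0..1} \<times> {0..1})
           (\<lambda>y. arc (subpath (fst y) 1 d +++ b0, subpath (fst y) 1 d +++ b1) (snd y))"
proof -
  let ?Q = "{0..1::real} \<times> {0..1::real}"
  let ?d = "\<lambda>t. subpath t 1 d"
  have cd: "continuous_on ?Q (\<lambda>y. ?d (fst y) (snd y))"
    using d by (rule continuous_on_subpath_to_finish)
  have cb: "continuous_on ?Q (\<lambda>y. b (snd y))" if "path b" for b :: path4
    using that unfolding path_def
    by (rule continuous_on_compose2[of "{0..1}" b _ snd]) (auto intro: continuous_intros)
  have c0: "continuous_on ?Q (\<lambda>y. (?d (fst y) +++ b0) (snd y))"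
    by (rule continuous_on_homotopic_join_lemma[OF cd cb[OF b0]])
       (use assms in \<open>auto simp: pathfinish_def pathstart_def subpath_def\<close>)
  have c1: "continuous_on ?Q (\<lambda>y. (?d (fst y) +++ b1) (snd y))"
    by (rule continuous_on_homotopic_join_lemma[OF cd cb[OF b1]])
       (use assms in \<open>auto simp: pathfinish_def pathstart_def subpath_def\<close>)
  have c0': "continuous_on ?Q (\<lambda>y. reversepath (?d (fst y) +++ b0) (snd y))"
    unfolding reversepath_def
    by (rule continuous_on_compose2[OF c0, of _ "\<lambda>y. (fst y, 1 - snd y)", simplified])
       (auto intro!: continuous_intros)
  show ?thesis
    unfolding arc_def fst_conv snd_conv
    by (rule continuous_on_homotopic_join_lemma[OF c0' c1])
       (use assms in \<open>simp add: pathfinish_def pathstart_def subpath_def reversepath_def joinpaths_def\<close>)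
qed

lemma crossing_homotopic_slide:
  assumes d: "path_in D d" and b0: "path_in E b0" and b1: "path_in E b1"
    and "pathstart b0 = pathfinish d" "pathstart b1 = pathfinish d"
    and "pathfinish b0 = z0" "pathfinish b1 = z1"
  shows "crossing_homotopic (arc (d +++ b0, d +++ b1)) (arc (linepath (pathfinish d) (pathfinish d) +++ b0,
           linepath (pathfinish d) (pathfinish d) +++ b1))"
proof -
  let ?d = "\<lambda>t. subpath t 1 d"
  define H where "H y = arc (?d (fst y) +++ b0, ?d (fst y) +++ b1) (snd y)" for y
  have "continuous_on ({0..1} \<times> {0..1}) H"
    unfolding H_def using assms by (intro continuous_on_arc_slide) (simp_all add: path_in_def)
  moreover have "H (t, s) \<in> E" if "t \<in> {0..1}" "s \<in> {0..1}" for t s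
  proof -
    have "path_in D (?d t)"
      using d that path_image_subpath_subset[of t 1 d] by (auto simp: path_in_def)
    then have "path_in E (?d t)"
      by (rule path_in_boundary_E)
    moreover have "pathfinish (?d t) = pathfinish d"
      by (simp add: pathfinish_def subpath_def)
    ultimately have "path_in E (arc (?d t +++ b0, ?d t +++ b1))"
      using assms by (simp add: arc_def)
    then show ?thesis
      using that unfolding path_in_def path_image_def H_def by auto
  qed
  moreover have "crosses_boundary (\<lambda>s. H (t, s))" if "t \<in> {0..1}" for t
  proof -
    have "d t \<in> D"
      using that d by (auto simp: path_in_def path_image_def)
    then show ?thesis
      using assms by (simp add: crosses_boundary_def H_def arc_def joinpaths_def reversepath_def
          subpath_def pathfinish_def pathstart_def)
  qed
  moreover have "H (0, s) = arc (d +++ b0, d +++ b1) s" for s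
    by (simp add: H_def)
  moreover have "H (1, s) = arc (linepath (pathfinish d) (pathfinish d) +++ b0,
      linepath (pathfinish d) (pathfinish d) +++ b1) s" for s
    by (simp add: H_def subpath_def linepath_refl pathfinish_def)
  ultimately show ?thesis
    unfolding crossing_homotopic_iff by (intro exI[of _ H]) auto
qed

lemma BL_rel_slideI:
  assumes x: "x \<in> B" and y: "y \<in> B" and d: "path_in D d"
    and "pathstart d = pathstart (fst x)" and df: "pathfinish d = pathstart (fst y)"
    and h0: "hp (fst x) (d +++ fst y)" and h1: "hp (snd x) (d +++ snd y)"
  shows "(x, y) \<in> R"
proof -
  note y' = BL_memD[OF y]
  let ?e = "pathfinish d"
  have "crossing_homotopic (arc x) (arc (d +++ fst y, d +++ snd y))"
    unfolding arc_def fst_conv snd_conv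
    by (rule crossing_homotopic_join) (use h0 h1 BL_memD[OF x] in \<open>auto intro: homotopic_paths_reversepath_D\<close>)
  also have "crossing_homotopic \<dots> (arc (linepath ?e ?e +++ fst y, linepath ?e ?e +++ snd y))"
    by (rule crossing_homotopic_slide) (use d y' df in auto)
  also have "crossing_homotopic \<dots> (arc y)"
    unfolding arc_def fst_conv snd_conv
  proof (rule crossing_homotopic_join)
    show "hp (reversepath (linepath ?e ?e +++ fst y)) (reversepath (fst y))"
      using y' df by (intro homotopic_paths_reversepath_D homotopic_paths_lid') (auto simp: path_in_def)
    show "hp (linepath ?e ?e +++ snd y) (snd y)"
      using y' df by (intro homotopic_paths_lid') (auto simp: path_in_def)
  qed (use y' df in auto)
  finally show ?thesis
    using x y by (simp add: BL_rel_iff)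
qed

lemma BL_rel_homotopicI:
  assumes x: "x \<in> B" and y: "y \<in> B" and h0: "hp (fst x) (fst y)" and h1: "hp (snd x) (snd y)"
  shows "(x, y) \<in> R"
proof -
  let ?p = "pathstart (fst x)"
  have p: "?p \<in> D" "pathstart (fst y) = ?p" "pathstart (snd y) = ?p"
    using BL_memD[OF x] BL_memD[OF y] homotopic_paths_imp_pathstart[OF h0] by auto
  show ?thesis
  proof (rule BL_rel_slideI[OF x y, of "linepath ?p ?p"])
    show "path_in D (linepath ?p ?p)"
      using p by (simp add: path_in_def)
    have "hp (fst y) (linepath ?p ?p +++ fst y)" "hp (snd y) (linepath ?p ?p +++ snd y)"
      using BL_memD[OF y] p by (auto simp: path_in_def intro!: homotopic_paths_sym[OF homotopic_paths_lid'])
    then show "hp (fst x) (linepath ?p ?p +++ fst y)" "hp (snd x) (linepath ?p ?p +++ snd y)"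
      using h0 h1 homotopic_paths_trans by blast+
  qed (use p in auto)
qed

lemma arc_lower_half: "x \<in> B \<Longrightarrow> s \<in> {0..1} \<Longrightarrow> arc x (s / 2) = reversepath (fst x) s"
  by (auto simp: arc_def joinpaths_def)

lemma arc_upper_half: "x \<in> B \<Longrightarrow> s \<in> {0..1} \<Longrightarrow> arc x (1/2 + s / 2) = snd x s"
  by (auto simp: arc_def joinpaths_def BL_iff reversepath_def pathstart_def algebra_simps)

text \<open>The track of the midpoint under a crossing homotopy is the sliding path d; the halves
  below and above the midpoint then give the two homotopies.\<close>

lemma crossing_homotopic_halves:
  assumes x: "x \<in> B" and y: "y \<in> B" and "crossing_homotopic (arc x) (arc y)"
  obtains d where "path_in D d" "pathstart d = pathstart (fst x)" "pathfinish d = pathstart (fst y)"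
    "hp (reversepath (fst x) +++ d) (reversepath (fst y))" "hp (snd x) (d +++ snd y)"
proof -
  let ?Q = "{0..1::real} \<times> {0..1::real}"
  obtain H where cH: "continuous_on ?Q H" and HE: "H ` ?Q \<subseteq> E"
    and H0: "\<And>s. s \<in> {0..1} \<Longrightarrow> H (0, s) = arc x s" and H1: "\<And>s. s \<in> {0..1} \<Longrightarrow> H (1, s) = arc y s"
    and Hc: "\<And>t. t \<in> {0..1} \<Longrightarrow> crosses_boundary (\<lambda>s. H (t, s))"
    using assms(3) unfolding crossing_homotopic_iff by blast
  note half = continuous_on_square_half[OF cH HE]
  define d where "d t = H (t, 1/2)" for t
  have Hb: "H (t, 0) = z0" "H (t, 1) = z1" "H (t, 1/2) \<in> D" if "t \<in> {0..1}" for t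
    using Hc[OF that] by (simp_all add: crosses_boundary_def)
  have "continuous_on {0..1} (\<lambda>t::real. (t, 1/2::real))" "(\<lambda>t::real. (t, 1/2::real)) ` {0..1} \<subseteq> ?Q"
    by (auto intro!: continuous_intros)
  then have "path d"
    unfolding d_def path_def by (rule continuous_on_compose2[OF cH])
  with Hb have d: "path_in D d"
    by (auto simp: path_in_def d_def path_image_def)
  have ds: "pathstart d = pathstart (fst x)" and df: "pathfinish d = pathstart (fst y)"
    using H0[of "1/2"] H1[of "1/2"]
    by (simp_all add: d_def pathstart_def pathfinish_def arc_def joinpaths_def reversepath_def)
  have "hp (reversepath (fst x) +++ d) (linepath z0 z0 +++ reversepath (fst y))"
    by (rule homotopic_paths_square[OF half[of 0, simplified]])
       (simp_all add: H0 H1 Hb arc_lower_half[OF x] arc_lower_half[OF y] d_def linepath_refl)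
  also have "hp (linepath z0 z0 +++ reversepath (fst y)) (reversepath (fst y))"
    using BL_memD[OF y] by (intro homotopic_paths_lid') (simp_all add: path_in_def)
  finally have h0: "hp (reversepath (fst x) +++ d) (reversepath (fst y))" .
  have "hp (snd x) (snd x +++ linepath z1 z1)"
    using BL_memD[OF x] by (intro homotopic_paths_sym[OF homotopic_paths_rid']) (simp_all add: path_in_def)
  also have "hp \<dots> (d +++ snd y)"
    by (rule homotopic_paths_square[OF half[of "1/2", simplified]])
       (simp_all add: H0 H1 Hb arc_upper_half[OF x] arc_upper_half[OF y] d_def linepath_refl)
  finally show ?thesis
    using that d ds df h0 by blast
qed

lemma BL_rel_slideE:
  assumes "(x, y) \<in> R"
  obtains d where "path_in D d" "pathstart d = pathstart (fst x)" "pathfinish d = pathstart (fst y)"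
    "hp (fst x) (d +++ fst y)" "hp (snd x) (d +++ snd y)"
proof -
  have x: "x \<in> B" and y: "y \<in> B" and "crossing_homotopic (arc x) (arc y)"
    using assms by (auto simp: BL_rel_iff)
  then obtain d where d: "path_in D d" and ds: "pathstart d = pathstart (fst x)"
    and df: "pathfinish d = pathstart (fst y)" and h1: "hp (snd x) (d +++ snd y)"
    and "hp (reversepath (fst x) +++ d) (reversepath (fst y))"
    by (rule crossing_homotopic_halves)
  then have "hp (reversepath (reversepath (fst x) +++ d)) (fst y)"
    using homotopic_paths_reversepath_D by fastforce
  moreover have "reversepath (reversepath (fst x) +++ d) = reversepath d +++ fst x"
    using ds by (simp add: reversepath_joinpaths)
  ultimately have reversed: "hp (reversepath d +++ fst x) (fst y)"
    by simp
  have "hp (fst x) (d +++ (reversepath d +++ fst x))"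
    by (rule homotopic_paths_sym[OF homotopic_paths_cancel_left])
       (use d BL_memD[OF x] ds in \<open>simp_all add: path_in_boundary_E\<close>)
  also have "hp \<dots> (d +++ fst y)"
    by (rule homotopic_paths_join_right[OF _ reversed]) (use d in \<open>simp_all add: path_in_boundary_E\<close>)
  finally show ?thesis
    using that d ds df h1 by blast
qed

definition loop_at :: "real^4 \<Rightarrow> path4 \<Rightarrow> bool" where
  "loop_at z l \<longleftrightarrow> path_in E l \<and> pathstart l = z \<and> pathfinish l = z"

definition meridian_loop :: "path4 \<Rightarrow> path4" where
  "meridian_loop b = reversepath b +++ (m (pathstart b) +++ b)"

definition append_loop0 :: "path4 \<times> path4 \<Rightarrow> path4 \<Rightarrow> path4 \<times> path4" where
  "append_loop0 x l = (fst x +++ l, snd x)"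

definition append_loop1 :: "path4 \<times> path4 \<Rightarrow> path4 \<Rightarrow> path4 \<times> path4" where
  "append_loop1 x l = (fst x, snd x +++ l)"

lemma fst_append_loop0 [simp]: "fst (append_loop0 x l) = fst x +++ l"
  and snd_append_loop0 [simp]: "snd (append_loop0 x l) = snd x"
  and fst_append_loop1 [simp]: "fst (append_loop1 x l) = fst x"
  and snd_append_loop1 [simp]: "snd (append_loop1 x l) = snd x +++ l"
  by (simp_all add: append_loop0_def append_loop1_def)

lemma append_loop0_append_loop1: "append_loop0 (append_loop1 x l) l' = append_loop1 (append_loop0 x l') l"
  by (simp add: append_loop0_def append_loop1_def)

lemma loop_at_reversepath [simp]: "loop_at z (reversepath l) \<longleftrightarrow> loop_at z l"
  by (auto simp: loop_at_def)

lemma loop_at_meridian_loop: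
  "path_in E b \<Longrightarrow> pathstart b \<in> D \<Longrightarrow> loop_at (pathfinish b) (meridian_loop b)"
  by (simp add: loop_at_def meridian_loop_def)

lemma loop_at_meridian_loop0 [simp]: "y \<in> B \<Longrightarrow> loop_at z0 (meridian_loop (fst y))"
  using loop_at_meridian_loop BL_memD by metis

lemma loop_at_meridian_loop1 [simp]: "y \<in> B \<Longrightarrow> loop_at z1 (meridian_loop (snd y))"
  using loop_at_meridian_loop BL_memD by metis

lemma append_loop0_in_BL [simp]: "x \<in> B \<Longrightarrow> loop_at z0 l \<Longrightarrow> append_loop0 x l \<in> B"
  by (simp add: BL_iff loop_at_def)

lemma append_loop1_in_BL [simp]: "x \<in> B \<Longrightarrow> loop_at z1 l \<Longrightarrow> append_loop1 x l \<in> B"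
  by (simp add: BL_iff loop_at_def)

lemma meridian_loop_slide:
  assumes d: "path_in D d" and b': "path_in E b'" "pathstart b' \<in> D" "pathfinish d = pathstart b'"
    and hb: "hp b (d +++ b')"
  shows "hp (meridian_loop b) (meridian_loop b')"
proof -
  have "pathstart b = pathstart d" "pathstart d \<in> D"
    using homotopic_paths_imp_pathstart[OF hb] d by (auto simp: path_in_def pathstart_in_path_image subsetD)
  then show ?thesis
    unfolding meridian_loop_def
    using meridian_conjugate[OF d] homotopic_paths_imp_pathfinish[OF hb] assms
    by (intro homotopic_paths_conjugate[OF b'(1) path_in_boundary_E[OF d] _ hb]) simp_all
qed

lemma meridian_loop_BL_rel:
  assumes "(y, y') \<in> R"
  shows "hp (meridian_loop (fst y)) (meridian_loop (fst y'))"
    and "hp (meridian_loop (snd y)) (meridian_loop (snd y'))"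
proof -
  have y': "y' \<in> B"
    using assms by (simp add: BL_rel_iff)
  obtain d where "path_in D d" "pathfinish d = pathstart (fst y')"
    "hp (fst y) (d +++ fst y')" "hp (snd y) (d +++ snd y')"
    using BL_rel_slideE[OF assms] by metis
  then show "hp (meridian_loop (fst y)) (meridian_loop (fst y'))"
    and "hp (meridian_loop (snd y)) (meridian_loop (snd y'))"
    using BL_memD[OF y'] by (auto intro: meridian_loop_slide)
qed

lemma append_loop0_BL_rel:
  assumes xr: "(x, x') \<in> R" and l: "loop_at z0 l" and hl: "hp l l'"
  shows "(append_loop0 x l, append_loop0 x' l') \<in> R"
proof -
  have x: "x \<in> B" and x': "x' \<in> B"
    using xr by (auto simp: BL_rel_iff)
  obtain d where d: "path_in D d" "pathstart d = pathstart (fst x)" "pathfinish d = pathstart (fst x')"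
    and h0: "hp (fst x) (d +++ fst x')" and h1: "hp (snd x) (d +++ snd x')"
    using BL_rel_slideE[OF xr] by metis
  have l': "loop_at z0 l'"
    using l hl homotopic_paths_imp_path_in homotopic_paths_imp_pathstart homotopic_paths_imp_pathfinish
    by (metis loop_at_def)
  show ?thesis
  proof (rule BL_rel_slideI[OF append_loop0_in_BL[OF x l] append_loop0_in_BL[OF x' l'] d(1)])
    show "hp (fst (append_loop0 x l)) (d +++ fst (append_loop0 x' l'))"
      using homotopic_paths_join_slide[OF h0 hl] BL_memD[OF x] BL_memD[OF x'] d l by (simp add: loop_at_def)
    show "hp (snd (append_loop0 x l)) (d +++ snd (append_loop0 x' l'))"
      using h1 BL_memD[OF x] BL_memD[OF x'] d l by (simp add: loop_at_def)
  qed (use d in simp_all)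
qed

lemma append_loop1_BL_rel:
  assumes xr: "(x, x') \<in> R" and l: "loop_at z1 l" and hl: "hp l l'"
  shows "(append_loop1 x l, append_loop1 x' l') \<in> R"
proof -
  have x: "x \<in> B" and x': "x' \<in> B"
    using xr by (auto simp: BL_rel_iff)
  obtain d where d: "path_in D d" "pathstart d = pathstart (fst x)" "pathfinish d = pathstart (fst x')"
    and h0: "hp (fst x) (d +++ fst x')" and h1: "hp (snd x) (d +++ snd x')"
    using BL_rel_slideE[OF xr] by metis
  have l': "loop_at z1 l'"
    using l hl homotopic_paths_imp_path_in homotopic_paths_imp_pathstart homotopic_paths_imp_pathfinish
    by (metis loop_at_def)
  show ?thesis
  proof (rule BL_rel_slideI[OF append_loop1_in_BL[OF x l] append_loop1_in_BL[OF x' l'] d(1)])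
    show "hp (fst (append_loop1 x l)) (d +++ fst (append_loop1 x' l'))"
      using h0 BL_memD[OF x] BL_memD[OF x'] d l by (simp add: loop_at_def)
    show "hp (snd (append_loop1 x l)) (d +++ snd (append_loop1 x' l'))"
      using homotopic_paths_join_slide[OF h1 hl] BL_memD[OF x] BL_memD[OF x'] d l by (simp add: loop_at_def)
  qed (use d in simp_all)
qed

lemma append_loop0_cancel:
  assumes x: "x \<in> B" and l: "loop_at z0 l"
  shows "(append_loop0 (append_loop0 x l) (reversepath l), x) \<in> R"
  by (rule BL_rel_homotopicI)
     (use x l BL_memD[OF x] in \<open>simp_all add: loop_at_def homotopic_paths_cancel_right
       homotopic_paths_refl_in del: homotopic_paths_refl\<close>)

lemma append_loop1_cancel:
  assumes x: "x \<in> B" and l: "loop_at z1 l"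
  shows "(append_loop1 (append_loop1 x l) (reversepath l), x) \<in> R"
  by (rule BL_rel_homotopicI)
     (use x l BL_memD[OF x] in \<open>simp_all add: loop_at_def homotopic_paths_cancel_right
       homotopic_paths_refl_in del: homotopic_paths_refl\<close>)

lemma meridian_loop_join:
  assumes "path_in E b" "path_in E l" "pathstart b \<in> D" "pathfinish b = pathstart l"
  shows "hp (meridian_loop (b +++ l)) (reversepath l +++ (meridian_loop b +++ l))"
  unfolding meridian_loop_def pathstart_join
  by (rule homotopic_paths_conjugate_join) (use assms in simp_all)

lemma join_reversepath_meridian_loop:
  assumes b: "path_in E b" and p: "pathstart b \<in> D"
  shows "hp (b +++ reversepath (meridian_loop b)) (reversepath (m (pathstart b)) +++ b)"
proof -
  let ?M = "m (pathstart b)"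
  have "hp (b +++ ((reversepath b +++ reversepath ?M) +++ b))
      (b +++ (reversepath b +++ (reversepath ?M +++ b)))"
    by (rule homotopic_paths_join_right, simp add: b, rule homotopic_paths_assoc_in') (use b p in simp_all)
  also have "hp \<dots> (reversepath ?M +++ b)"
    by (rule homotopic_paths_cancel_left) (use b p in simp_all)
  finally show ?thesis
    using p by (simp add: meridian_loop_def reversepath_joinpaths)
qed

lemma reversepath_meridian_join_meridian_loop:
  assumes b: "path_in E b" and p: "pathstart b \<in> D"
  shows "hp (reversepath (m (pathstart b)) +++ (b +++ meridian_loop b)) b"
proof -
  let ?M = "m (pathstart b)"
  have "hp (reversepath ?M +++ (b +++ meridian_loop b)) (reversepath ?M +++ (?M +++ b))"
    unfolding meridian_loop_def
    by (rule homotopic_paths_join_right, simp add: p, rule homotopic_paths_cancel_left) (use b p in simp_all)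
  also have "hp \<dots> b"
    by (rule homotopic_paths_cancel_rev_left) (use b p in simp_all)
  finally show ?thesis .
qed

text \<open>The geometric content of the second biquandle axiom: sliding along the reversed meridian at
  the common starting point.\<close>

lemma BL_rel_append_loop0_reversepath_append_loop1:
  assumes a: "a \<in> B"
  shows "(append_loop0 a (reversepath (meridian_loop (fst a))), append_loop1 a (meridian_loop (snd a))) \<in> R"
proof -
  note a' = BL_memD[OF a]
  let ?p = "pathstart (fst a)"
  show ?thesis
  proof (rule BL_rel_slideI[of _ _ "reversepath (m ?p)"])
    show "hp (fst (append_loop0 a (reversepath (meridian_loop (fst a)))))
        (reversepath (m ?p) +++ fst (append_loop1 a (meridian_loop (snd a))))"
      using join_reversepath_meridian_loop a' by simp
    show "hp (snd (append_loop0 a (reversepath (meridian_loop (fst a)))))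
        (reversepath (m ?p) +++ snd (append_loop1 a (meridian_loop (snd a))))"
      using homotopic_paths_sym[OF reversepath_meridian_join_meridian_loop[of "snd a"]] a' by simp
  qed (use a a' path_in_meridian in simp_all)
qed

lemma BL_rel_append_loop1_reversepath_append_loop0:
  assumes a: "a \<in> B"
  shows "(append_loop1 a (reversepath (meridian_loop (snd a))), append_loop0 a (meridian_loop (fst a))) \<in> R"
proof -
  note a' = BL_memD[OF a]
  let ?p = "pathstart (fst a)"
  show ?thesis
  proof (rule BL_rel_slideI[of _ _ "reversepath (m ?p)"])
    show "hp (fst (append_loop1 a (reversepath (meridian_loop (snd a)))))
        (reversepath (m ?p) +++ fst (append_loop0 a (meridian_loop (fst a))))"
      using homotopic_paths_sym[OF reversepath_meridian_join_meridian_loop[of "fst a"]] a' by simp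
    show "hp (snd (append_loop1 a (reversepath (meridian_loop (snd a)))))
        (reversepath (m ?p) +++ snd (append_loop0 a (meridian_loop (fst a))))"
      using join_reversepath_meridian_loop[of "snd a"] a' by simp
  qed (use a a' path_in_meridian in simp_all)
qed

abbreviation "Q \<equiv> BL_hat E D z0 z1"
abbreviation "up \<equiv> BL_up R m"
abbreviation "down \<equiv> BL_down R m"

definition BL_class :: "path4 \<times> path4 \<Rightarrow> (path4 \<times> path4) set" where
  "BL_class x = R `` {x}"

definition up_inv :: "(path4 \<times> path4) set \<Rightarrow> (path4 \<times> path4) set \<Rightarrow> (path4 \<times> path4) set" where
  "up_inv X Y = BL_class (append_loop0 (SOME x. x \<in> X) (reversepath (meridian_loop (fst (SOME y. y \<in> Y)))))"

definition down_inv :: "(path4 \<times> path4) set \<Rightarrow> (path4 \<times> path4) set \<Rightarrow> (path4 \<times> path4) set" where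
  "down_inv X Y = BL_class (append_loop1 (SOME x. x \<in> X) (reversepath (meridian_loop (snd (SOME y. y \<in> Y)))))"

lemma BL_class_in_BL_hat [simp]: "x \<in> B \<Longrightarrow> BL_class x \<in> Q"
  by (simp add: BL_hat_def BL_class_def quotientI)

lemma BL_class_eqI: "(x, y) \<in> R \<Longrightarrow> BL_class x = BL_class y"
  unfolding BL_class_def using equiv_BL_rel by (rule equiv_class_eq)

lemma BL_hat_cases:
  assumes "X \<in> Q"
  obtains x where "x \<in> B" "X = BL_class x"
  using assms by (auto simp: BL_hat_def BL_class_def elim: quotientE)

lemma some_in_BL_class:
  assumes "x \<in> B"
  shows "((SOME y. y \<in> BL_class x), x) \<in> R"
proof -
  have "x \<in> BL_class x"
    using equiv_class_self[OF equiv_BL_rel assms] by (simp add: BL_class_def)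
  then have "(SOME y. y \<in> BL_class x) \<in> BL_class x"
    by (rule someI)
  then show ?thesis
    using equiv_BL_rel by (auto simp: BL_class_def elim: equivE dest: symD)
qed

lemma BL_up_class:
  assumes x: "x \<in> B" and y: "y \<in> B"
  shows "up (BL_class x) (BL_class y) = BL_class (append_loop0 x (meridian_loop (fst y)))"
proof -
  define x' where "x' = (SOME x'. x' \<in> BL_class x)"
  define y' where "y' = (SOME y'. y' \<in> BL_class y)"
  have x'x: "(x', x) \<in> R" and y'y: "(y', y) \<in> R"
    using some_in_BL_class x y by (simp_all add: x'_def y'_def)
  have "up (BL_class x) (BL_class y) = BL_class (append_loop0 x' (meridian_loop (fst y')))"
    unfolding BL_up_def x'_def[symmetric] y'_def[symmetric]
    by (simp add: split_beta BL_class_def append_loop0_def append_loop1_def meridian_loop_def)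
  also have "\<dots> = BL_class (append_loop0 x (meridian_loop (fst y)))"
    using y'y by (intro BL_class_eqI append_loop0_BL_rel[OF x'x] meridian_loop_BL_rel(1))
      (simp_all add: BL_rel_iff)
  finally show ?thesis .
qed

lemma BL_down_class:
  assumes x: "x \<in> B" and y: "y \<in> B"
  shows "down (BL_class x) (BL_class y) = BL_class (append_loop1 x (meridian_loop (snd y)))"
proof -
  define x' where "x' = (SOME x'. x' \<in> BL_class x)"
  define y' where "y' = (SOME y'. y' \<in> BL_class y)"
  have x'x: "(x', x) \<in> R" and y'y: "(y', y) \<in> R"
    using some_in_BL_class x y by (simp_all add: x'_def y'_def)
  have "down (BL_class x) (BL_class y) = BL_class (append_loop1 x' (meridian_loop (snd y')))"
    unfolding BL_down_def x'_def[symmetric] y'_def[symmetric]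
    by (simp add: split_beta BL_class_def append_loop0_def append_loop1_def meridian_loop_def)
  also have "\<dots> = BL_class (append_loop1 x (meridian_loop (snd y)))"
    using y'y by (intro BL_class_eqI append_loop1_BL_rel[OF x'x] meridian_loop_BL_rel(2))
      (simp_all add: BL_rel_iff)
  finally show ?thesis .
qed

lemma up_inv_class:
  assumes x: "x \<in> B" and y: "y \<in> B"
  shows "up_inv (BL_class x) (BL_class y) = BL_class (append_loop0 x (reversepath (meridian_loop (fst y))))"
proof -
  define x' where "x' = (SOME x'. x' \<in> BL_class x)"
  define y' where "y' = (SOME y'. y' \<in> BL_class y)"
  have x'x: "(x', x) \<in> R" and y'y: "(y', y) \<in> R"
    using some_in_BL_class x y by (simp_all add: x'_def y'_def)
  have "up_inv (BL_class x) (BL_class y) = BL_class (append_loop0 x' (reversepath (meridian_loop (fst y'))))"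
    unfolding up_inv_def x'_def[symmetric] y'_def[symmetric]
    by (simp add: split_beta BL_class_def append_loop0_def append_loop1_def meridian_loop_def)
  also have "\<dots> = BL_class (append_loop0 x (reversepath (meridian_loop (fst y))))"
    using y'y
    by (intro BL_class_eqI append_loop0_BL_rel[OF x'x] homotopic_paths_reversepath_D meridian_loop_BL_rel(1))
      (simp_all add: BL_rel_iff)
  finally show ?thesis .
qed

lemma down_inv_class:
  assumes x: "x \<in> B" and y: "y \<in> B"
  shows "down_inv (BL_class x) (BL_class y) = BL_class (append_loop1 x (reversepath (meridian_loop (snd y))))"
proof -
  define x' where "x' = (SOME x'. x' \<in> BL_class x)"
  define y' where "y' = (SOME y'. y' \<in> BL_class y)"
  have x'x: "(x', x) \<in> R" and y'y: "(y', y) \<in> R"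
    using some_in_BL_class x y by (simp_all add: x'_def y'_def)
  have "down_inv (BL_class x) (BL_class y)
      = BL_class (append_loop1 x' (reversepath (meridian_loop (snd y'))))"
    unfolding down_inv_def x'_def[symmetric] y'_def[symmetric]
    by (simp add: split_beta BL_class_def append_loop0_def append_loop1_def meridian_loop_def)
  also have "\<dots> = BL_class (append_loop1 x (reversepath (meridian_loop (snd y))))"
    using y'y
    by (intro BL_class_eqI append_loop1_BL_rel[OF x'x] homotopic_paths_reversepath_D meridian_loop_BL_rel(2))
      (simp_all add: BL_rel_iff)
  finally show ?thesis .
qed

lemma up_in_BL_hat: "X \<in> Q \<Longrightarrow> Y \<in> Q \<Longrightarrow> up X Y \<in> Q"
  by (elim BL_hat_cases) (simp add: BL_up_class)

lemma down_in_BL_hat: "X \<in> Q \<Longrightarrow> Y \<in> Q \<Longrightarrow> down X Y \<in> Q"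
  by (elim BL_hat_cases) (simp add: BL_down_class)

lemma up_inv_in_BL_hat: "X \<in> Q \<Longrightarrow> Y \<in> Q \<Longrightarrow> up_inv X Y \<in> Q"
  by (elim BL_hat_cases) (simp add: up_inv_class)

lemma down_inv_in_BL_hat: "X \<in> Q \<Longrightarrow> Y \<in> Q \<Longrightarrow> down_inv X Y \<in> Q"
  by (elim BL_hat_cases) (simp add: down_inv_class)

lemma up_inv_up: "X \<in> Q \<Longrightarrow> Y \<in> Q \<Longrightarrow> up_inv (up X Y) Y = X"
  by (elim BL_hat_cases) (simp add: BL_up_class up_inv_class BL_class_eqI append_loop0_cancel)

lemma up_up_inv: "X \<in> Q \<Longrightarrow> Y \<in> Q \<Longrightarrow> up (up_inv X Y) Y = X"
  by (elim BL_hat_cases)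
     (simp add: BL_up_class up_inv_class BL_class_eqI
           append_loop0_cancel[of _ "reversepath (meridian_loop _)", simplified])

lemma down_inv_down: "X \<in> Q \<Longrightarrow> Y \<in> Q \<Longrightarrow> down_inv (down X Y) Y = X"
  by (elim BL_hat_cases) (simp add: BL_down_class down_inv_class BL_class_eqI append_loop1_cancel)

lemma down_down_inv: "X \<in> Q \<Longrightarrow> Y \<in> Q \<Longrightarrow> down (down_inv X Y) Y = X"
  by (elim BL_hat_cases)
     (simp add: BL_down_class down_inv_class BL_class_eqI
           append_loop1_cancel[of _ "reversepath (meridian_loop _)", simplified])

lemma bij_betw_up: "Y \<in> Q \<Longrightarrow> bij_betw (\<lambda>X. up X Y) Q Q"
  by (rule bij_betw_byWitness[where f' = "\<lambda>X. up_inv X Y"])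
     (auto simp: up_inv_up up_up_inv up_in_BL_hat up_inv_in_BL_hat)

lemma bij_betw_down: "Y \<in> Q \<Longrightarrow> bij_betw (\<lambda>X. down X Y) Q Q"
  by (rule bij_betw_byWitness[where f' = "\<lambda>X. down_inv X Y"])
     (auto simp: down_inv_down down_down_inv down_in_BL_hat down_inv_in_BL_hat)

lemma BL_hat_pair_cases:
  assumes "P \<in> Q \<times> Q"
  obtains x y where "x \<in> B" "y \<in> B" "P = (BL_class x, BL_class y)"
  using assms by (metis BL_hat_cases SigmaE)

lemma bij_betw_switch: "bij_betw (\<lambda>(X, Y). (down Y X, up X Y)) (Q \<times> Q) (Q \<times> Q)"
proof (rule bij_betw_byWitness[where f' = "\<lambda>(U, W). (up_inv W U, down_inv U W)"])
  show "\<forall>P\<in>Q \<times> Q. (\<lambda>(U, W). (up_inv W U, down_inv U W)) ((\<lambda>(X, Y). (down Y X, up X Y)) P) = P"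
  proof
    fix P assume "P \<in> Q \<times> Q"
    then obtain x y where "x \<in> B" "y \<in> B" "P = (BL_class x, BL_class y)"
      by (rule BL_hat_pair_cases)
    then show "(\<lambda>(U, W). (up_inv W U, down_inv U W)) ((\<lambda>(X, Y). (down Y X, up X Y)) P) = P"
      by (simp add: BL_up_class BL_down_class up_inv_class down_inv_class BL_class_eqI
          append_loop0_cancel append_loop1_cancel)
  qed
  show "\<forall>P\<in>Q \<times> Q. (\<lambda>(X, Y). (down Y X, up X Y)) ((\<lambda>(U, W). (up_inv W U, down_inv U W)) P) = P"
  proof
    fix P assume "P \<in> Q \<times> Q"
    then obtain u w where "u \<in> B" "w \<in> B" "P = (BL_class u, BL_class w)"
      by (rule BL_hat_pair_cases)
    then show "(\<lambda>(X, Y). (down Y X, up X Y)) ((\<lambda>(U, W). (up_inv W U, down_inv U W)) P) = P"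
      by (simp add: BL_up_class BL_down_class up_inv_class down_inv_class BL_class_eqI
          append_loop0_cancel[of _ "reversepath (meridian_loop _)", simplified]
          append_loop1_cancel[of _ "reversepath (meridian_loop _)", simplified])
  qed
qed (auto simp: up_in_BL_hat down_in_BL_hat up_inv_in_BL_hat down_inv_in_BL_hat)

lemma inv_into_up: "A \<in> Q \<Longrightarrow> inv_into Q (\<lambda>X. up X A) A = up_inv A A"
  by (rule inv_into_f_eq[OF bij_betw_imp_inj_on[OF bij_betw_up] up_inv_in_BL_hat up_up_inv])

lemma inv_into_down: "A \<in> Q \<Longrightarrow> inv_into Q (\<lambda>X. down X A) A = down_inv A A"
  by (rule inv_into_f_eq[OF bij_betw_imp_inj_on[OF bij_betw_down] down_inv_in_BL_hat down_down_inv])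

lemma up_inv_fixed_by_down: "A \<in> Q \<Longrightarrow> up_inv A A = down A (up_inv A A)"
  by (elim BL_hat_cases)
     (simp add: up_inv_class BL_down_class BL_class_eqI BL_rel_append_loop0_reversepath_append_loop1)

lemma down_inv_fixed_by_up: "A \<in> Q \<Longrightarrow> down_inv A A = up A (down_inv A A)"
  by (elim BL_hat_cases)
     (simp add: down_inv_class BL_up_class BL_class_eqI BL_rel_append_loop1_reversepath_append_loop0)

lemma BL_up_up:
  assumes "A \<in> Q" "B' \<in> Q" "C \<in> Q"
  shows "up (up A B') C = up (up A (down C B')) (up B' C)"
proof -
  obtain a b c where abc: "a \<in> B" "b \<in> B" "c \<in> B" and eqs: "A = BL_class a" "B' = BL_class b" "C = BL_class c"
    using assms by (metis BL_hat_cases)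
  note a' = BL_memD[OF abc(1)] and b' = BL_memD[OF abc(2)] and c' = BL_memD[OF abc(3)]
  have "hp (meridian_loop (fst b +++ meridian_loop (fst c)))
      (reversepath (meridian_loop (fst c)) +++ (meridian_loop (fst b) +++ meridian_loop (fst c)))"
    using b' c' loop_at_meridian_loop0[OF abc(3)] by (intro meridian_loop_join) (simp_all add: loop_at_def)
  then have "hp ((fst a +++ meridian_loop (fst b)) +++ meridian_loop (fst c))
      ((fst a +++ meridian_loop (fst c)) +++ meridian_loop (fst b +++ meridian_loop (fst c)))"
    using a' loop_at_meridian_loop0[OF abc(2)] loop_at_meridian_loop0[OF abc(3)]
    by (intro homotopic_paths_insert_conjugate) (simp_all add: loop_at_def)
  then have "(append_loop0 (append_loop0 a (meridian_loop (fst b))) (meridian_loop (fst c)),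
      append_loop0 (append_loop0 a (meridian_loop (fst c)))
        (meridian_loop (fst (append_loop0 b (meridian_loop (fst c)))))) \<in> R"
    using abc a' loop_at_meridian_loop0[OF append_loop0_in_BL[OF abc(2) loop_at_meridian_loop0[OF abc(3)]]]
    by (intro BL_rel_homotopicI) (simp_all add: homotopic_paths_refl_in del: homotopic_paths_refl)
  then show ?thesis
    using abc by (simp add: eqs BL_up_class BL_down_class BL_class_eqI)
qed

lemma BL_down_down:
  assumes "A \<in> Q" "B' \<in> Q" "C \<in> Q"
  shows "down (down A B') C = down (down A (up C B')) (down B' C)"
proof -
  obtain a b c where abc: "a \<in> B" "b \<in> B" "c \<in> B" and eqs: "A = BL_class a" "B' = BL_class b" "C = BL_class c"
    using assms by (metis BL_hat_cases)
  note a' = BL_memD[OF abc(1)] and b' = BL_memD[OF abc(2)] and c' = BL_memD[OF abc(3)]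
  have "hp (meridian_loop (snd b +++ meridian_loop (snd c)))
      (reversepath (meridian_loop (snd c)) +++ (meridian_loop (snd b) +++ meridian_loop (snd c)))"
    using b' c' loop_at_meridian_loop1[OF abc(3)] by (intro meridian_loop_join) (simp_all add: loop_at_def)
  then have "hp ((snd a +++ meridian_loop (snd b)) +++ meridian_loop (snd c))
      ((snd a +++ meridian_loop (snd c)) +++ meridian_loop (snd b +++ meridian_loop (snd c)))"
    using a' loop_at_meridian_loop1[OF abc(2)] loop_at_meridian_loop1[OF abc(3)]
    by (intro homotopic_paths_insert_conjugate) (simp_all add: loop_at_def)
  then have "(append_loop1 (append_loop1 a (meridian_loop (snd b))) (meridian_loop (snd c)),
      append_loop1 (append_loop1 a (meridian_loop (snd c)))
        (meridian_loop (snd (append_loop1 b (meridian_loop (snd c)))))) \<in> R"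
    using abc a' loop_at_meridian_loop1[OF append_loop1_in_BL[OF abc(2) loop_at_meridian_loop1[OF abc(3)]]]
    by (intro BL_rel_homotopicI) (simp_all add: homotopic_paths_refl_in del: homotopic_paths_refl)
  then show ?thesis
    using abc by (simp add: eqs BL_up_class BL_down_class BL_class_eqI)
qed

lemma BL_up_down:
  assumes "A \<in> Q" "B' \<in> Q" "C \<in> Q"
  shows "up (down A B') (down C (up B' A)) = down (up A C) (up B' (down C A))"
  using assms by (elim BL_hat_cases) (simp add: BL_up_class BL_down_class append_loop0_append_loop1)

theorem biquandle_BL_hat: "biquandle Q up down"
  unfolding biquandle_def
  by (intro conjI ballI bij_betw_up bij_betw_down bij_betw_switch up_in_BL_hat down_in_BL_hat
      BL_up_up BL_down_down BL_up_down)
     (simp_all add: inv_into_up inv_into_down up_inv_fixed_by_down[symmetric] down_inv_fixed_by_up[symmetric])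

end

section \<open>Tubular neighbourhoods of links\<close>

text \<open>The chart realises each solid torus S^1 x D^2 as the solid torus of revolution in
  complex x real (a copy of R^3) with core circle of radius 2 and tube radius 1.\<close>

definition torus_chart :: "nat \<times> complex \<times> complex \<Rightarrow> complex \<times> real" where
  "torus_chart y = (complex_of_real (2 + Re (snd (snd y))) * fst (snd y), Im (snd (snd y)))"

lemma continuous_on_torus_chart: "continuous_on A torus_chart"
  unfolding torus_chart_def by (intro continuous_intros)

lemma torus_chart_norm_fst:
  assumes "cmod u = 1" "-2 \<le> Re w"
  shows "norm (fst (torus_chart (i, u, w))) = 2 + Re w"
  unfolding torus_chart_def fst_conv snd_conv norm_mult norm_of_real using assms by simp

lemma torus_chart_snd [simp]: "snd (torus_chart (i, u, w)) = Im w"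
  by (simp add: torus_chart_def)

lemma torus_chart_eqD:
  assumes "cmod u = 1" "cmod w \<le> 1" "cmod u' = 1" "cmod w' \<le> 1"
    and "torus_chart (i, u, w) = torus_chart (j, u', w')"
  shows "u = u' \<and> w = w'"
proof -
  have "\<bar>Re w\<bar> \<le> 1" "\<bar>Re w'\<bar> \<le> 1"
    using abs_Re_le_cmod[of w] abs_Re_le_cmod[of w'] assms by linarith+
  then have "-2 \<le> Re w" "-2 \<le> Re w'"
    by linarith+
  then have "Re w = Re w'" "Im w = Im w'"
    using arg_cong[OF assms(5), of "\<lambda>z. norm (fst z)"] arg_cong[OF assms(5), of snd]
    by (simp_all add: torus_chart_norm_fst assms(1,3))
  then have "w = w'"
    by (simp add: complex_eq_iff)
  moreover have "complex_of_real (2 + Re w) \<noteq> 0"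
    using \<open>\<bar>Re w\<bar> \<le> 1\<close> by (simp add: complex_eq_iff)
  ultimately show ?thesis
    using assms(5) by (simp add: torus_chart_def)
qed

lemma torus_chart_push_out_notin:
  assumes "cmod u = 1" "cmod w = 1" "0 < d" "d \<le> 1"
  shows "torus_chart (i, u, complex_of_real (1 + d) * w) \<notin> torus_chart ` solid_tori k"
proof
  assume "torus_chart (i, u, complex_of_real (1 + d) * w) \<in> torus_chart ` solid_tori k"
  then obtain j u' w' where w': "cmod u' = 1" "cmod w' \<le> 1"
    and eq: "torus_chart (i, u, complex_of_real (1 + d) * w) = torus_chart (j, u', w')"
    by (auto simp: solid_tori_def)
  have "(1 + d) * \<bar>Re w\<bar> \<le> 2 * 1"
    using abs_Re_le_cmod[of w] assms by (intro mult_mono) auto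
  then have "-2 \<le> (1 + d) * Re w"
    using assms by (smt (verit) mult_minus_right abs_ge_minus_self mult_left_mono)
  have "\<bar>Re w'\<bar> \<le> 1"
    using abs_Re_le_cmod[of w'] w' by linarith
  then have "Re w' = (1 + d) * Re w" "Im w' = (1 + d) * Im w"
    using arg_cong[OF eq, of "\<lambda>z. norm (fst z)"] arg_cong[OF eq, of snd] \<open>-2 \<le> (1 + d) * Re w\<close>
    by (simp_all add: torus_chart_norm_fst assms w')
  then have "w' = complex_of_real (1 + d) * w"
    by (simp add: complex_eq_iff)
  then have "cmod w' = norm (complex_of_real (1 + d)) * cmod w"
    by (simp only: norm_mult)
  then have "cmod w' = 1 + d"
    using assms by (simp only: norm_of_real) simp
  then show False
    using w' assms by simp
qed

lemma dist_torus_chart_push_out: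
  assumes "cmod w = 1" "cmod u = 1" "0 \<le> d"
  shows "dist (torus_chart (i, u, w)) (torus_chart (i, u, complex_of_real (1 + d) * w)) \<le> 2 * d"
proof -
  have "torus_chart (i, u, w) - torus_chart (i, u, complex_of_real (1 + d) * w)
      = (- (complex_of_real (d * Re w) * u), - (d * Im w))"
    by (simp add: torus_chart_def algebra_simps)
  then have "dist (torus_chart (i, u, w)) (torus_chart (i, u, complex_of_real (1 + d) * w))
      \<le> norm (complex_of_real (d * Re w) * u) + \<bar>d * Im w\<bar>"
    using norm_Pair_le[of "- (complex_of_real (d * Re w) * u)" "- (d * Im w)"] by (simp add: dist_norm)
  also have "\<dots> \<le> d + d"
    using abs_Re_le_cmod[of w] abs_Im_le_cmod[of w] assms
    by (intro add_mono) (auto simp: norm_mult abs_mult mult_left_le)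
  finally show ?thesis by simp
qed

lemma compact_solid_tori: "compact (solid_tori k)"
proof -
  have "solid_tori k = {..<k} \<times> (sphere 0 1 \<times> cball 0 1)"
    by (auto simp: solid_tori_def)
  then show ?thesis
    by (simp add: compact_Times finite_imp_compact)
qed

lemma boundary_tori_subset_solid_tori: "boundary_tori k \<subseteq> solid_tori k"
  by (auto simp: boundary_tori_def solid_tori_def)

lemma open_torus_chart_image:
  fixes \<phi> :: "nat \<times> complex \<times> complex \<Rightarrow> real^4"
  assumes cont: "continuous_on (solid_tori k) \<phi>" and inj: "inj_on \<phi> (solid_tori k)"
    and U: "openin (top_of_set (sphere 0 1)) U" "U \<subseteq> \<phi> ` solid_tori k"
  defines "\<psi> \<equiv> inv_into (solid_tori k) \<phi>"
  shows "open ((torus_chart \<circ> \<psi>) ` (U \<inter> \<psi> -` ({i} \<times> UNIV)))"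
proof -
  let ?V = "U \<inter> \<psi> -` ({i} \<times> UNIV)"
  have cpsi: "continuous_on (\<phi> ` solid_tori k) \<psi>"
    unfolding \<psi>_def by (rule continuous_on_inv[OF cont compact_solid_tori]) (simp add: inj)
  have psiS: "\<psi> y \<in> solid_tori k" if "y \<in> \<phi> ` solid_tori k" for y
    using that unfolding \<psi>_def by (rule inv_into_into)
  have "openin (top_of_set U) ?V"
    by (rule continuous_openin_preimage_gen[OF continuous_on_subset[OF cpsi U(2)]])
       (simp add: open_Times open_discrete)
  then have V: "openin (top_of_set (sphere 0 1)) ?V"
    using U(1) by (rule openin_trans)
  have "inj_on (torus_chart \<circ> \<psi>) ?V"
  proof (rule inj_onI)
    fix y1 y2 assume y: "y1 \<in> ?V" "y2 \<in> ?V" "(torus_chart \<circ> \<psi>) y1 = (torus_chart \<circ> \<psi>) y2"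
    then have N: "y1 \<in> \<phi> ` solid_tori k" "y2 \<in> \<phi> ` solid_tori k"
      using U(2) by auto
    have chart: "\<exists>u w. \<psi> y = (i, u, w) \<and> cmod u = 1 \<and> cmod w \<le> 1" if "y \<in> ?V" "y \<in> \<phi> ` solid_tori k" for y
      using psiS[OF that(2)] that(1) by (cases "\<psi> y") (simp add: solid_tori_def)
    obtain u1 w1 u2 w2 where "\<psi> y1 = (i, u1, w1)" "\<psi> y2 = (i, u2, w2)"
      and "cmod u1 = 1" "cmod w1 \<le> 1" "cmod u2 = 1" "cmod w2 \<le> 1"
      using chart[OF y(1) N(1)] chart[OF y(2) N(2)] by blast
    then have "\<psi> y1 = \<psi> y2"
      using torus_chart_eqD[of u1 w1 u2 w2 i i] y(3) by simp
    then show "y1 = y2"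
      using N unfolding \<psi>_def by (metis f_inv_into_f)
  qed
  moreover have "continuous_on ?V (torus_chart \<circ> \<psi>)"
    by (intro continuous_on_compose continuous_on_torus_chart continuous_on_subset[OF cpsi]) (use U in auto)
  ultimately have "openin (top_of_set UNIV) ((torus_chart \<circ> \<psi>) ` ?V)"
    by (intro invariance_of_domain_sphere_affine_set[OF _ _ _ _ _ _ V]) auto
  then show ?thesis
    by simp
qed

lemma torus_chart_ball_not_subset:
  assumes "cmod u = 1" "cmod w = 1" "r > 0"
  shows "\<not> ball (torus_chart (i, u, w)) r \<subseteq> torus_chart ` solid_tori k"
proof
  assume sub: "ball (torus_chart (i, u, w)) r \<subseteq> torus_chart ` solid_tori k"
  define d where "d = min (r / 4) 1"
  have d: "0 < d" "d \<le> 1" "2 * d < r"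
    using \<open>r > 0\<close> by (auto simp: d_def)
  then have "torus_chart (i, u, complex_of_real (1 + d) * w) \<in> ball (torus_chart (i, u, w)) r"
    using dist_torus_chart_push_out[OF assms(2,1), of d i] by simp
  then show False
    using sub torus_chart_push_out_notin[OF assms(1,2) d(1,2), of i k] by blast
qed

lemma sphere_ball_subset_nbhd:
  assumes "p \<notin> exterior \<phi> k"
  obtains e where "e > 0" "sphere 0 1 \<inter> ball p e \<subseteq> nbhd \<phi> k"
proof -
  obtain e where "e > 0" and far: "\<And>y. y \<in> sphere 0 1 - nbhd \<phi> k \<Longrightarrow> \<not> dist y p < e"
    using assms unfolding exterior_def closure_approachable by auto
  moreover have "sphere 0 1 \<inter> ball p e \<subseteq> nbhd \<phi> k"
  proof
    fix y assume "y \<in> sphere 0 1 \<inter> ball p e"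
    then have "y \<in> sphere 0 1" "dist y p < e"
      by (auto simp: dist_commute)
    then show "y \<in> nbhd \<phi> k"
      using far by blast
  qed
  ultimately show ?thesis
    using that by blast
qed

text \<open>A boundary point p = phi(i, u, w) with |w| = 1 is a limit of points outside the neighbourhood:
  otherwise a neighbourhood of p in the sphere lies in N_L, and by invariance of domain its chart
  image would contain a ball around torus_chart(i, u, w), hence points torus_chart(i, u, (1 + d) w)
  outside the image of the solid tori.\<close>

lemma bd_nbhd_subset_exterior:
  fixes \<phi> :: "nat \<times> complex \<times> complex \<Rightarrow> real^4"
  assumes cont: "continuous_on (solid_tori k) \<phi>" and inj: "inj_on \<phi> (solid_tori k)"
    and sph: "\<phi> ` solid_tori k \<subseteq> sphere 0 1"
  shows "bd_nbhd \<phi> k \<subseteq> exterior \<phi> k"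
proof
  define \<psi> where "\<psi> = inv_into (solid_tori k) \<phi>"
  fix p assume "p \<in> bd_nbhd \<phi> k"
  then obtain i u w where p: "p = \<phi> (i, u, w)" "i < k" "cmod u = 1" "cmod w = 1"
    by (auto simp: bd_nbhd_def boundary_tori_def)
  have pS: "(i, u, w) \<in> solid_tori k"
    using p by (simp add: solid_tori_def)
  show "p \<in> exterior \<phi> k"
  proof (rule ccontr)
    assume "p \<notin> exterior \<phi> k"
    then obtain e where "e > 0" and "sphere 0 1 \<inter> ball p e \<subseteq> nbhd \<phi> k"
      by (rule sphere_ball_subset_nbhd)
    then have e: "sphere 0 1 \<inter> ball p e \<subseteq> \<phi> ` solid_tori k"
      by (simp add: nbhd_def)
    let ?V = "sphere 0 1 \<inter> ball p e \<inter> \<psi> -` ({i} \<times> UNIV)"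
    have "open ((torus_chart \<circ> \<psi>) ` ?V)"
      unfolding \<psi>_def using cont inj _ e by (rule open_torus_chart_image) (simp add: openin_open_Int)
    moreover have "\<psi> p = (i, u, w)"
      using inv_into_f_f[OF inj pS] by (simp add: \<psi>_def p)
    moreover have "p \<in> sphere 0 1 \<inter> ball p e"
      using \<open>e > 0\<close> sph pS by (auto simp: p)
    ultimately have "torus_chart (i, u, w) \<in> (torus_chart \<circ> \<psi>) ` ?V"
      by (metis IntI comp_apply rev_image_eqI UNIV_I mem_Times_iff singletonI fst_conv vimageI)
    with \<open>open ((torus_chart \<circ> \<psi>) ` ?V)\<close> obtain r
      where "r > 0" and r: "ball (torus_chart (i, u, w)) r \<subseteq> (torus_chart \<circ> \<psi>) ` ?V"
      using open_contains_ball by blast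
    moreover have "(torus_chart \<circ> \<psi>) ` ?V \<subseteq> torus_chart ` solid_tori k"
      using e unfolding \<psi>_def image_comp[symmetric] by (blast intro: inv_into_into)
    ultimately show False
      using torus_chart_ball_not_subset[OF p(3,4) \<open>r > 0\<close>, of i k] by blast
  qed
qed

locale solid_tori_embedding =
  fixes k :: nat and \<phi> :: "nat \<times> complex \<times> complex \<Rightarrow> real^4"
  assumes cont: "continuous_on (solid_tori k) \<phi>" and inj: "inj_on \<phi> (solid_tori k)"
begin

abbreviation "\<psi> \<equiv> inv_into (solid_tori k) \<phi>"

definition rotate_fibre :: "nat \<times> complex \<times> complex \<Rightarrow> real \<Rightarrow> nat \<times> complex \<times> complex" where
  "rotate_fibre x t = (fst x, fst (snd x), snd (snd x) * cis (2 * pi * t))"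

lemma rotate_fibre_boundary_tori: "x \<in> boundary_tori k \<Longrightarrow> rotate_fibre x t \<in> boundary_tori k"
  by (auto simp: rotate_fibre_def boundary_tori_def norm_mult)

lemma rotate_fibre_0 [simp]: "rotate_fibre x 0 = x"
  by (simp add: rotate_fibre_def)

lemma rotate_fibre_1 [simp]: "rotate_fibre x 1 = x"
  by (simp add: rotate_fibre_def complex_eq_iff)

lemma continuous_on_inv_embedding: "continuous_on (\<phi> ` solid_tori k) \<psi>"
  by (rule continuous_on_inv[OF cont compact_solid_tori]) (simp add: inj)

lemma bd_nbhd_subset_nbhd: "bd_nbhd \<phi> k \<subseteq> \<phi> ` solid_tori k"
  using boundary_tori_subset_solid_tori by (auto simp: bd_nbhd_def)

lemma inv_embedding_bd_nbhd:
  assumes "q \<in> bd_nbhd \<phi> k"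
  shows "\<psi> q \<in> boundary_tori k"
proof -
  obtain x where x: "x \<in> boundary_tori k" "q = \<phi> x"
    using assms by (auto simp: bd_nbhd_def)
  then have "\<psi> q = x"
    using inv_into_f_f[OF inj] boundary_tori_subset_solid_tori by blast
  then show ?thesis
    using x by simp
qed

lemma embedding_inv_bd_nbhd [simp]: "q \<in> bd_nbhd \<phi> k \<Longrightarrow> \<phi> (\<psi> q) = q"
  using bd_nbhd_subset_nbhd by (auto intro: f_inv_into_f)

lemma meridian_eq: "meridian \<phi> k q = (\<lambda>t. \<phi> (rotate_fibre (\<psi> q) t))"
  by (simp add: meridian_def split_beta rotate_fibre_def)

lemma rotate_fibre_in_bd_nbhd:
  "q \<in> bd_nbhd \<phi> k \<Longrightarrow> \<phi> (rotate_fibre (\<psi> q) t) \<in> bd_nbhd \<phi> k"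
  using rotate_fibre_boundary_tori[OF inv_embedding_bd_nbhd] by (simp add: bd_nbhd_def)

lemma path_in_meridian: "q \<in> bd_nbhd \<phi> k \<Longrightarrow> path_in (bd_nbhd \<phi> k) (meridian \<phi> k q)"
  unfolding path_in_def path_def path_image_def meridian_eq
  using rotate_fibre_boundary_tori[OF inv_embedding_bd_nbhd] boundary_tori_subset_solid_tori
    rotate_fibre_in_bd_nbhd
  by (intro conjI continuous_on_compose2[OF cont]) (auto simp: rotate_fibre_def intro!: continuous_intros)

lemma pathstart_meridian: "q \<in> bd_nbhd \<phi> k \<Longrightarrow> pathstart (meridian \<phi> k q) = q"
  by (simp add: meridian_eq pathstart_def)

lemma pathfinish_meridian: "q \<in> bd_nbhd \<phi> k \<Longrightarrow> pathfinish (meridian \<phi> k q) = q"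
  by (simp add: meridian_eq pathfinish_def)

text \<open>Rotating the fibre circles over a path d in the boundary sweeps out a square whose sides are
  the meridians at the ends of d and two copies of d.\<close>

lemma meridian_commute:
  assumes d: "path_in (bd_nbhd \<phi> k) d"
  shows "homotopic_paths (bd_nbhd \<phi> k) (meridian \<phi> k (pathstart d) +++ d) (d +++ meridian \<phi> k (pathfinish d))"
proof -
  let ?Q = "{0..1::real} \<times> {0..1::real}"
  let ?G = "\<lambda>y. rotate_fibre (\<psi> (d (fst y))) (snd y)"
  have dD: "t \<in> {0..1} \<Longrightarrow> d t \<in> bd_nbhd \<phi> k" for t
    using d by (auto simp: path_in_def path_image_def)
  have cd: "continuous_on {0..1} (\<psi> \<circ> d)"
    using d bd_nbhd_subset_nbhd unfolding path_in_def path_def path_image_def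
    by (intro continuous_on_compose continuous_on_subset[OF continuous_on_inv_embedding]) auto
  have "continuous_on ?Q (\<lambda>y. \<psi> (d (fst y)))"
    by (rule continuous_on_compose2[OF cd[unfolded o_def] continuous_on_fst]) auto
  then have "continuous_on ?Q ?G"
    unfolding rotate_fibre_def by (intro continuous_intros)
  moreover have "?G ` ?Q \<subseteq> solid_tori k"
  proof (rule image_subsetI)
    fix y :: "real \<times> real"
    assume "y \<in> ?Q"
    then have "d (fst y) \<in> bd_nbhd \<phi> k"
      by (intro dD) auto
    then show "?G y \<in> solid_tori k"
      by (rule subsetD[OF boundary_tori_subset_solid_tori
          rotate_fibre_boundary_tori[OF inv_embedding_bd_nbhd]])
  qed
  ultimately have "continuous_on ?Q (\<phi> \<circ> ?G)"
    by (intro continuous_on_compose continuous_on_subset[OF cont])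
  moreover have "(\<phi> \<circ> ?G) ` ?Q \<subseteq> bd_nbhd \<phi> k"
  proof (rule image_subsetI)
    fix y :: "real \<times> real"
    assume "y \<in> ?Q"
    then have "d (fst y) \<in> bd_nbhd \<phi> k"
      by (intro dD) auto
    then show "(\<phi> \<circ> ?G) y \<in> bd_nbhd \<phi> k"
      by (simp add: rotate_fibre_in_bd_nbhd)
  qed
  ultimately show ?thesis
    by (rule homotopic_paths_square) (simp_all add: meridian_eq pathstart_def pathfinish_def dD)
qed

lemma meridian_system_exterior:
  assumes "\<phi> ` solid_tori k \<subseteq> sphere 0 1"
  shows "meridian_system (exterior \<phi> k) (bd_nbhd \<phi> k) (meridian \<phi> k)"
proof
  show "bd_nbhd \<phi> k \<subseteq> exterior \<phi> k"
    using cont inj assms by (rule bd_nbhd_subset_exterior)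
qed (rule path_in_meridian pathstart_meridian pathfinish_meridian meridian_commute; assumption)+

end

theorem mainTheorem6:
  fixes k :: nat
    and \<phi> :: "nat \<times> complex \<times> complex \<Rightarrow> real^4"
    and h :: "real^3 \<Rightarrow> real^4"
    and v :: "real^3"
  assumes "continuous_on (solid_tori k) \<phi>"
    and "inj_on \<phi> (solid_tori k)"
    and "\<phi> ` solid_tori k \<subseteq> sphere 0 1"
    and "continuous_on (cball 0 1) h"
    and "inj_on h (cball 0 1)"
    and "h ` cball 0 1 \<subseteq> sphere 0 1"
    and "nbhd \<phi> k \<subseteq> h ` ball 0 1"
    and "norm v = 1"
  shows "biquandle
           (BL_hat (exterior \<phi> k) (bd_nbhd \<phi> k) (h v) (h (- v)))
           (BL_up (BL_rel (exterior \<phi> k) (bd_nbhd \<phi> k) (h v) (h (- v))) (meridian \<phi> k))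
           (BL_down (BL_rel (exterior \<phi> k) (bd_nbhd \<phi> k) (h v) (h (- v))) (meridian \<phi> k))"
proof -
  interpret solid_tori_embedding k \<phi>
    using assms(1,2) by unfold_locales
  interpret meridian_system "exterior \<phi> k" "bd_nbhd \<phi> k" "h v" "h (- v)" "meridian \<phi> k"
    using assms(3) by (rule meridian_system_exterior)
  show ?thesis
    by (rule biquandle_BL_hat)
qed

end
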